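(* For every $d\ge2$, $B_{d,3}(1,1)=3$.
   Context: $T_{d,3}=\bigoplus_{\ell=0}^3(\mathbb{R}^d)^{\otimes\ell}$ is the truncated tensor algebra with product the bilinear extension of the tensor product of levels, set to $0$ when the total level exceeds $3$. $\mathfrak{g}_{d,3}$ is the smallest Lie subalgebra (commutator bracket) containing $e_1,\dots,e_d$; $\exp(\mathbf{z})=\sum_{\ell=0}^3\mathbf{z}^{\otimes\ell}/\ell!$; $\mathcal{G}_{d,3}=\exp(\mathfrak{g}_{d,3})$ (a group), $\log=\exp^{-1}$. For $\mathbf{x}\in\mathcal{G}_{d,3}^N$, $\mathsf{bary}(\mathbf{x})$ is the unique $\mathbf{m}$ with $\sum_i\log(\mathbf{m}^{-1}\mathbf{x}_i)=0$. For a path $X:[0,1]\to\mathbb{R}^d$ its $3$-truncated signature $\sigma(X)\in\mathcal{G}_{d,3}$ has $\sigma^{(0)}=1$ and $\sigma^{(\ell)}_{w_1\dots w_\ell}=\int_{0<t_1<\dots<t_\ell<1}\dot X_{w_1}(t_1)\cdots\dot X_{w_\ell}(t_\ell)\,dt$. $\mathcal{L}^{\mathrm{im}}_{d,\le 3,m}$ is the set of $\sigma(X)$ for piecewise linear $X:[0,1]\to\mathbb{R}^d$ with $m$ segments, and $B_{d,3}(\alpha)=\min\{m\in\mathbb{N}:\mathsf{bary}(\mathcal{L}^{\mathrm{im}}_{d,\le 3,\alpha_1}\times\dots\times\mathcal{L}^{\mathrm{im}}_{d,\le 3,\alpha_N})\subseteq\mathcal{L}^{\mathrm{im}}_{d,\le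 3,m}\}$. *)

theory Defs
  imports "HOL-Analysis.Analysis"
begin

text \<open>Truncated tensor algebra T_{d,3}: an element is a coefficient function on words
  over the alphabet 'd (the basis e_w of tensors, w a word), vanishing on words of length > 3.\<close>

type_synonym 'd tens = "'d list \<Rightarrow> real"

definition Tset :: "'d tens set" where
  "Tset = {x. \<forall>w. 3 < length w \<longrightarrow> x w = 0}"

definition tzero :: "'d tens" where "tzero = (\<lambda>w. 0)"
definition tone :: "'d tens" where "tone = (\<lambda>w. if w = [] then 1 else 0)"
definition tbasis :: "'d \<Rightarrow> 'd tens" where "tbasis i = (\<lambda>w. if w = [i] then 1 else 0)"
definition tadd :: "'d tens \<Rightarrow> 'd tens \<Rightarrow> 'd tens" where "tadd x y = (\<lambda>w. x w + y w)"
definition tsub :: "'d tens \<Rightarrow> 'd tens \<Rightarrow> 'd tens" where "tsub x y = (\<lambda>w. x w - y w)"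
definition tscale :: "real \<Rightarrow> 'd tens \<Rightarrow> 'd tens" where "tscale c x = (\<lambda>w. c * x w)"

definition tmul :: "'d tens \<Rightarrow> 'd tens \<Rightarrow> 'd tens" where
  "tmul x y = (\<lambda>w. if length w \<le> 3
      then (\<Sum>k\<in>{0..length w}. x (take k w) * y (drop k w)) else 0)"

definition tbracket :: "'d tens \<Rightarrow> 'd tens \<Rightarrow> 'd tens" where
  "tbracket x y = tsub (tmul x y) (tmul y x)"

text \<open>The free step-3 nilpotent Lie algebra g_{d,3}: the smallest Lie subalgebra
  (linear subspace closed under the commutator) containing e_1, ..., e_d.\<close>
inductive_set lie_gen :: "'d tens set" where
  gen: "tbasis i \<in> lie_gen"
| add: "x \<in> lie_gen \<Longrightarrow> y \<in> lie_gen \<Longrightarrow> tadd x y \<in> lie_gen"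
| scale: "x \<in> lie_gen \<Longrightarrow> tscale c x \<in> lie_gen"
| bracket: "x \<in> lie_gen \<Longrightarrow> y \<in> lie_gen \<Longrightarrow> tbracket x y \<in> lie_gen"

definition texp :: "'d tens \<Rightarrow> 'd tens" where
  "texp z = tadd (tadd (tadd tone z) (tscale (1/2) (tmul z z)))
                 (tscale (1/6) (tmul z (tmul z z)))"

definition Ggrp :: "'d tens set" where "Ggrp = texp ` lie_gen"

definition tlog :: "'d tens \<Rightarrow> 'd tens" where "tlog = inv_into lie_gen texp"

definition tinv :: "'d tens \<Rightarrow> 'd tens" where
  "tinv x = (THE y. y \<in> Tset \<and> tmul x y = tone \<and> tmul y x = tone)"

definition bary :: "'d tens list \<Rightarrow> 'd tens" where
  "bary xs = (THE m. m \<in> Ggrp \<and>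
      (\<forall>w. (\<Sum>i<length xs. tlog (tmul (tinv m) (xs ! i)) w) = 0))"

definition pw_linear :: "nat \<Rightarrow> (real \<Rightarrow> real^'d) \<Rightarrow> bool" where
  "pw_linear m X \<longleftrightarrow> (\<exists>t :: nat \<Rightarrow> real. t 0 = 0 \<and> t m = 1 \<and>
      (\<forall>i<m. t i < t (Suc i)) \<and>
      (\<forall>i<m. \<exists>a b :: real^'d. \<forall>s\<in>{t i..t (Suc i)}. X s = a + s *\<^sub>R b))"

text \<open>Iterated integrals: it_int X [w_k,...,w_1] t =
  int_{0<t_1<...<t_k<t} dX_{w_1}(t_1) ... dX_{w_k}(t_k) (word given reversed).\<close>
fun it_int :: "(real \<Rightarrow> real^'d) \<Rightarrow> 'd list \<Rightarrow> real \<Rightarrow> real" where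
  "it_int X [] t = 1"
| "it_int X (w # ws) t =
     integral {0..t} (\<lambda>s. it_int X ws s * (vector_derivative X (at s) $ w))"

definition sig3 :: "(real \<Rightarrow> real^'d) \<Rightarrow> 'd tens" where
  "sig3 X = (\<lambda>w. if length w \<le> 3 then it_int X (rev w) 1 else 0)"

definition Lim :: "nat \<Rightarrow> ('d::finite) tens set" where
  "Lim m = {sig3 X | X. pw_linear m X}"

definition Bd3 :: "nat list \<Rightarrow> ('d::finite) itself \<Rightarrow> nat" where
  "Bd3 \<alpha> _ = (LEAST m. bary ` {xs. length xs = length \<alpha> \<and>
        (\<forall>i<length \<alpha>. xs ! i \<in> (Lim (\<alpha> ! i) :: 'd tens set))} \<subseteq> (Lim m :: 'd tens set))"

end

theory Submission
  imports Defs
begin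

text \<open>
  Since \<open>log (m\<^sup>-\<^sup>1 exp c) = bch (-log m) c\<close> with the Baker--Campbell--Hausdorff series cut off
  at degree 3, the barycentre equation for two level-one elements \<open>exp c\<^sub>1, exp c\<^sub>2\<close> can be solved
  degree by degree: the barycentre is \<open>exp \<mu>\<close> with
  \<open>\<mu> = (c\<^sub>1 + c\<^sub>2)/2 + ([c\<^sub>2,[c\<^sub>1,c\<^sub>2]] - [c\<^sub>1,[c\<^sub>1,c\<^sub>2]])/48\<close>, and
  \<open>exp \<mu> = exp c\<^sub>1 exp (-(3c\<^sub>1 + c\<^sub>2)/4) exp ((c\<^sub>1 + 3c\<^sub>2)/4)\<close>.
  By Chen's identity the signature of a piecewise linear path is the product of the
  exponentials of its increments, so the barycentre is the signature of a path with three
  segments, while a path with at most two segments has signature \<open>exp a exp b\<close>.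
  For \<open>c\<^sub>1 = e\<^sub>i, c\<^sub>2 = e\<^sub>j\<close> the level-two part of \<open>exp \<mu>\<close> is symmetric, which forces
  \<open>a\<^sub>i = a\<^sub>j\<close> and \<open>b\<^sub>i = b\<^sub>j\<close>; then the coefficient of \<open>e\<^sub>ie\<^sub>ie\<^sub>j\<close> is \<open>0\<close> in \<open>exp \<mu>\<close>
  but \<open>(a\<^sub>i + b\<^sub>i)\<^sup>3/6 = 1/48\<close> in \<open>exp a exp b\<close>.
\<close>

section \<open>The truncated tensor algebra\<close>

lemma tmul_Nil [simp]: "tmul x y [] = x [] * y []"
  by (simp add: tmul_def)

lemma tmul_word1 [simp]: "tmul x y [a] = x [] * y [a] + x [a] * y []"
  by (simp add: tmul_def atLeast0AtMost atMost_Suc)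

lemma tmul_word2 [simp]: "tmul x y [a, b] = x [] * y [a, b] + x [a] * y [b] + x [a, b] * y []"
  by (simp add: tmul_def atLeast0AtMost atMost_Suc)

lemma tmul_word3 [simp]:
  "tmul x y [a, b, c] = x [] * y [a, b, c] + x [a] * y [b, c] + x [a, b] * y [c] + x [a, b, c] * y []"
  by (simp add: tmul_def atLeast0AtMost atMost_Suc)

lemma tmul_long: "3 < length w \<Longrightarrow> tmul x y w = 0"
  by (simp add: tmul_def)

lemma tadd_apply [simp]: "tadd x y w = x w + y w" by (simp add: tadd_def)
lemma tsub_apply [simp]: "tsub x y w = x w - y w" by (simp add: tsub_def)
lemma tscale_apply [simp]: "tscale c x w = c * x w" by (simp add: tscale_def)
lemma tzero_apply [simp]: "tzero w = 0" by (simp add: tzero_def)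
lemma tbracket_apply [simp]: "tbracket x y w = tmul x y w - tmul y x w" by (simp add: tbracket_def)

lemma tone_simps [simp]: "tone [] = 1" "tone (a # w) = 0"
  by (simp_all add: tone_def)

lemma tbasis_simps [simp]:
  "tbasis i [] = 0" "tbasis i [a] = (if a = i then 1 else 0)" "tbasis i (a # b # w) = 0"
  by (simp_all add: tbasis_def)

lemma Tset_closed [simp]:
  "tmul x y \<in> Tset" "tbracket x y \<in> Tset" "tone \<in> Tset" "tzero \<in> Tset" "tbasis i \<in> Tset"
  "x \<in> Tset \<Longrightarrow> y \<in> Tset \<Longrightarrow> tadd x y \<in> Tset"
  "x \<in> Tset \<Longrightarrow> y \<in> Tset \<Longrightarrow> tsub x y \<in> Tset"
  "x \<in> Tset \<Longrightarrow> tscale c x \<in> Tset"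
  by (auto simp: Tset_def tmul_long tone_def tbasis_def)

lemma texp_Tset [simp]: "z \<in> Tset \<Longrightarrow> texp z \<in> Tset"
  by (simp add: texp_def)

lemma words_le_3_cases:
  assumes "length w \<le> 3"
  obtains "w = []" | a where "w = [a]" | a b where "w = [a, b]" | a b c where "w = [a, b, c]"
  using assms by (auto simp: le_Suc_eq length_Suc_conv numeral_3_eq_3)

lemma Tset_eqI:
  assumes "x \<in> Tset" "y \<in> Tset" "x [] = y []" "\<And>a. x [a] = y [a]" "\<And>a b. x [a, b] = y [a, b]"
    "\<And>a b c. x [a, b, c] = y [a, b, c]"
  shows "x = y"
proof
  fix w
  show "x w = y w"
  proof (cases "length w \<le> 3")
    case True
    then show ?thesis by (cases rule: words_le_3_cases) (use assms in simp_all)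
  next
    case False
    then show ?thesis using assms(1,2) by (simp add: Tset_def)
  qed
qed

lemma tmul_assoc: "tmul (tmul x y) z = tmul x (tmul y z)"
  by (rule Tset_eqI) (simp_all add: algebra_simps)

lemma tmul_tone_left [simp]: "x \<in> Tset \<Longrightarrow> tmul tone x = x"
  by (rule Tset_eqI) simp_all

lemma tmul_tone_right [simp]: "x \<in> Tset \<Longrightarrow> tmul x tone = x"
  by (rule Tset_eqI) simp_all

section \<open>Exponential, logarithm and the free nilpotent group\<close>

definition nilpotent_tens :: "'d tens \<Rightarrow> bool" where
  "nilpotent_tens z \<longleftrightarrow> z \<in> Tset \<and> z [] = 0"

definition tlog_series :: "'d tens \<Rightarrow> 'd tens" where
  "tlog_series x = (let y = tsub x tone in
     tadd (tsub y (tscale (1/2) (tmul y y))) (tscale (1/3) (tmul y (tmul y y))))"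

lemma tlog_series_texp: "nilpotent_tens z \<Longrightarrow> tlog_series (texp z) = z"
  unfolding nilpotent_tens_def
  by (rule Tset_eqI) (simp_all add: tlog_series_def texp_def Let_def algebra_simps)

definition bch :: "'d tens \<Rightarrow> 'd tens \<Rightarrow> 'd tens" where
  "bch x y = tadd (tadd (tadd x y) (tscale (1/2) (tbracket x y)))
     (tadd (tscale (1/12) (tbracket x (tbracket x y))) (tscale (1/12) (tbracket y (tbracket y x))))"

lemma texp_mul_texp:
  assumes "nilpotent_tens x" "nilpotent_tens y"
  shows "tmul (texp x) (texp y) = texp (bch x y)"
  using assms unfolding nilpotent_tens_def
  by (intro Tset_eqI) (simp_all add: texp_def bch_def field_simps)

lemma texp_uminus_mul_texp:
  assumes "nilpotent_tens z"
  shows "tmul (texp (tscale (-1) z)) (texp z) = tone" "tmul (texp z) (texp (tscale (-1) z)) = tone"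
  using assms unfolding nilpotent_tens_def
  by (auto intro!: Tset_eqI simp: texp_def algebra_simps)

lemma tinv_texp:
  assumes "nilpotent_tens z"
  shows "tinv (texp z) = texp (tscale (-1) z)"
  unfolding tinv_def
proof (rule the_equality)
  have "z \<in> Tset" using assms by (simp add: nilpotent_tens_def)
  then show "texp (tscale (-1) z) \<in> Tset \<and> tmul (texp z) (texp (tscale (-1) z)) = tone \<and>
      tmul (texp (tscale (-1) z)) (texp z) = tone"
    using texp_uminus_mul_texp[OF assms] by simp
next
  fix y
  assume y: "y \<in> Tset \<and> tmul (texp z) y = tone \<and> tmul y (texp z) = tone"
  have "y = tmul (tmul (texp (tscale (-1) z)) (texp z)) y"
    using texp_uminus_mul_texp[OF assms] y by simp
  also have "\<dots> = texp (tscale (-1) z)"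
    using y assms by (simp add: tmul_assoc nilpotent_tens_def)
  finally show "y = texp (tscale (-1) z)" .
qed

lemma lie_gen_nilpotent: "x \<in> lie_gen \<Longrightarrow> nilpotent_tens x"
  by (induction rule: lie_gen.induct) (simp_all add: nilpotent_tens_def Tset_def tmul_long tbasis_def)

lemma tsub_lie_gen: "x \<in> lie_gen \<Longrightarrow> y \<in> lie_gen \<Longrightarrow> tsub x y \<in> lie_gen"
  using lie_gen.add[OF _ lie_gen.scale[of y "-1"], of x] by (simp add: tadd_def tscale_def tsub_def)

lemma bch_lie_gen: "x \<in> lie_gen \<Longrightarrow> y \<in> lie_gen \<Longrightarrow> bch x y \<in> lie_gen"
  unfolding bch_def by (intro lie_gen.intros)

lemma inj_on_texp_lie_gen: "inj_on texp lie_gen"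
  by (rule inj_onI) (metis lie_gen_nilpotent tlog_series_texp)

lemma tlog_texp: "z \<in> lie_gen \<Longrightarrow> tlog (texp z) = z"
  unfolding tlog_def by (rule inv_into_f_f[OF inj_on_texp_lie_gen])

lemma Ggrp_tlog:
  assumes "g \<in> Ggrp"
  shows "tlog g \<in> lie_gen" "texp (tlog g) = g"
  using assms unfolding Ggrp_def tlog_def by (simp_all add: inv_into_into f_inv_into_f)

lemma tlog_tinv_texp_mul_texp:
  assumes "\<mu> \<in> lie_gen" "y \<in> lie_gen"
  shows "tlog (tmul (tinv (texp \<mu>)) (texp y)) = bch (tscale (-1) \<mu>) y"
proof -
  have "nilpotent_tens (tscale (-1) \<mu>)" "nilpotent_tens \<mu>" "nilpotent_tens y"
    using assms lie_gen_nilpotent by (auto simp: nilpotent_tens_def)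
  then have "tmul (tinv (texp \<mu>)) (texp y) = texp (bch (tscale (-1) \<mu>) y)"
    by (simp add: tinv_texp texp_mul_texp)
  then show ?thesis
    using assms by (simp add: tlog_texp bch_lie_gen lie_gen.scale)
qed

definition tlevel1 :: "real^'d \<Rightarrow> 'd tens" where
  "tlevel1 c = (\<lambda>w. case w of [a] \<Rightarrow> c $ a | _ \<Rightarrow> 0)"

lemma tlevel1_simps [simp]: "tlevel1 c [] = 0" "tlevel1 c [a] = c $ a" "tlevel1 c (a # b # w) = 0"
  by (simp_all add: tlevel1_def)

lemma tlevel1_Tset [simp]: "tlevel1 c \<in> Tset"
  by (auto simp: Tset_def tlevel1_def split: list.split)

lemma texp_tlevel1_simps [simp]:
  "texp (tlevel1 c) [] = 1" "texp (tlevel1 c) [a] = c $ a"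
  "texp (tlevel1 c) [a, b] = c $ a * c $ b / 2" "texp (tlevel1 c) [a, b, e] = c $ a * c $ b * c $ e / 6"
  by (simp_all add: texp_def)

lemma texp_tlevel1_zero: "texp (tlevel1 0) = tone"
  by (rule Tset_eqI) (simp_all add: texp_def)

lemma tlevel1_lie_gen: "tlevel1 (c :: real^'d::finite) \<in> lie_gen"
proof -
  define restrict where "restrict S = (\<lambda>w. case w of [a] \<Rightarrow> if a \<in> S then c $ a else 0 | _ \<Rightarrow> 0)"
    for S
  have "restrict S \<in> lie_gen" if "finite S" for S
    using that
  proof (induction rule: finite_induct)
    case empty
    have "restrict {} = tscale 0 (tbasis undefined)"
      by (rule ext) (simp add: restrict_def split: list.split)
    then show ?case
      by (metis lie_gen.gen lie_gen.scale)
  next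
    case (insert i S)
    have "restrict (insert i S) = tadd (restrict S) (tscale (c $ i) (tbasis i))"
      using insert.hyps by (intro ext) (auto simp: restrict_def tbasis_def split: list.split)
    with insert.IH show ?case
      by (metis lie_gen.add lie_gen.gen lie_gen.scale)
  qed
  from this[of UNIV] show ?thesis
    by (simp add: restrict_def tlevel1_def)
qed

section \<open>The barycentre of two level-one group elements\<close>

text \<open>The unique solution \<open>\<mu>\<close> of \<open>bch (-\<mu>) c\<^sub>1 + bch (-\<mu>) c\<^sub>2 = 0\<close>.\<close>
definition pair_bary_log :: "real^'d \<Rightarrow> real^'d \<Rightarrow> 'd tens" where
  "pair_bary_log c1 c2 = tadd (tlevel1 ((1/2) *\<^sub>R (c1 + c2)))
     (tscale (1/48) (tsub (tbracket (tlevel1 c2) (tbracket (tlevel1 c1) (tlevel1 c2)))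
                          (tbracket (tlevel1 c1) (tbracket (tlevel1 c1) (tlevel1 c2)))))"

lemma pair_bary_log_lie_gen: "pair_bary_log (c1 :: real^'d::finite) c2 \<in> lie_gen"
  unfolding pair_bary_log_def by (intro lie_gen.intros tsub_lie_gen tlevel1_lie_gen)

lemma bch_sum_eq_zero_iff:
  assumes "nilpotent_tens \<mu>"
  shows "tadd (bch (tscale (-1) \<mu>) (tlevel1 c1)) (bch (tscale (-1) \<mu>) (tlevel1 c2)) = tzero
    \<longleftrightarrow> \<mu> = pair_bary_log c1 c2"
proof
  assume "\<mu> = pair_bary_log c1 c2"
  then show "tadd (bch (tscale (-1) \<mu>) (tlevel1 c1)) (bch (tscale (-1) \<mu>) (tlevel1 c2)) = tzero"
    by (intro Tset_eqI) (simp_all add: pair_bary_log_def bch_def field_simps)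
next
  assume "tadd (bch (tscale (-1) \<mu>) (tlevel1 c1)) (bch (tscale (-1) \<mu>) (tlevel1 c2)) = tzero"
  then have K: "bch (tscale (-1) \<mu>) (tlevel1 c1) w + bch (tscale (-1) \<mu>) (tlevel1 c2) w = 0" for w
    by (metis tadd_apply tzero_apply)
  have \<mu>0: "\<mu> [] = 0" and \<mu>T: "\<mu> \<in> Tset"
    using assms by (auto simp: nilpotent_tens_def)
  have \<mu>1: "\<mu> [a] = (c1 $ a + c2 $ a) / 2" for a
    using K[of "[a]"] \<mu>0 by (simp add: bch_def)
  have \<mu>2: "\<mu> [a, b] = 0" for a b
    using K[of "[a, b]"] \<mu>0 \<mu>1[of a] \<mu>1[of b] by (simp add: bch_def field_simps)
  have \<mu>3: "\<mu> [a, b, e] = pair_bary_log c1 c2 [a, b, e]" for a b e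
    using K[of "[a, b, e]"] \<mu>0 \<mu>1[of a] \<mu>1[of b] \<mu>1[of e] \<mu>2[of a b] \<mu>2[of b e]
    by (simp add: bch_def pair_bary_log_def field_simps)
  show "\<mu> = pair_bary_log c1 c2"
    by (rule Tset_eqI) (simp_all add: \<mu>T \<mu>0 \<mu>1 \<mu>2 \<mu>3, simp_all add: pair_bary_log_def field_simps)
qed

lemma bary_pair_tlevel1:
  "bary [texp (tlevel1 c1), texp (tlevel1 (c2 :: real^'d::finite))] = texp (pair_bary_log c1 c2)"
proof -
  have bary_eq: "(\<forall>w. (\<Sum>i<length [texp (tlevel1 c1), texp (tlevel1 c2)].
      tlog (tmul (tinv (texp \<mu>)) ([texp (tlevel1 c1), texp (tlevel1 c2)] ! i)) w) = 0)
    \<longleftrightarrow> \<mu> = pair_bary_log c1 c2" if "\<mu> \<in> lie_gen" for \<mu>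
    using that bch_sum_eq_zero_iff[OF lie_gen_nilpotent[OF that], of c1 c2]
    by (simp add: tlog_tinv_texp_mul_texp tlevel1_lie_gen fun_eq_iff)
  show ?thesis
    unfolding bary_def
  proof (rule the_equality)
    show "texp (pair_bary_log c1 c2) \<in> Ggrp \<and> (\<forall>w. (\<Sum>i<length [texp (tlevel1 c1), texp (tlevel1 c2)].
        tlog (tmul (tinv (texp (pair_bary_log c1 c2))) ([texp (tlevel1 c1), texp (tlevel1 c2)] ! i)) w) = 0)"
      using bary_eq[OF pair_bary_log_lie_gen[of c1 c2]] pair_bary_log_lie_gen[of c1 c2] by (simp add: Ggrp_def)
  next
    fix m
    assume "m \<in> Ggrp \<and> (\<forall>w. (\<Sum>i<length [texp (tlevel1 c1), texp (tlevel1 c2)].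
        tlog (tmul (tinv m) ([texp (tlevel1 c1), texp (tlevel1 c2)] ! i)) w) = 0)"
    then show "m = texp (pair_bary_log c1 c2)"
      using bary_eq[OF Ggrp_tlog(1)] Ggrp_tlog(2) by metis
  qed
qed

lemma texp_pair_bary_log:
  "texp (pair_bary_log c1 c2) = tmul (tmul (texp (tlevel1 c1))
     (texp (tlevel1 (- (3/4) *\<^sub>R c1 - (1/4) *\<^sub>R c2)))) (texp (tlevel1 ((1/4) *\<^sub>R c1 + (3/4) *\<^sub>R c2)))"
  by (rule Tset_eqI) (simp_all add: pair_bary_log_def texp_def field_simps)

lemma texp_pair_bary_log_axis_ne_two_factors:
  fixes a b :: "real^'d"
  assumes "i \<noteq> j"
  shows "texp (pair_bary_log (axis i 1) (axis j 1)) \<noteq> tmul (texp (tlevel1 a)) (texp (tlevel1 b))"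
proof
  assume eq: "texp (pair_bary_log (axis i 1) (axis j 1)) = tmul (texp (tlevel1 a)) (texp (tlevel1 b))"
  have coeff: "texp (pair_bary_log (axis i 1) (axis j 1)) w = tmul (texp (tlevel1 a)) (texp (tlevel1 b)) w"
    for w
    using eq by simp
  have sum_i: "a $ i + b $ i = 1/2" and sum_j: "a $ j + b $ j = 1/2"
    using coeff[of "[i]"] coeff[of "[j]"] assms by (simp_all add: pair_bary_log_def texp_def axis_def)
  have parallel: "a $ i * b $ j = a $ j * b $ i"
    using coeff[of "[i, j]"] coeff[of "[j, i]"] assms
    by (simp add: pair_bary_log_def texp_def axis_def field_simps)
  have cubic: "a $ i * a $ i * a $ j + b $ i * b $ i * b $ j + 3 * a $ i * a $ i * b $ j
      + 3 * a $ i * b $ i * b $ j = 0"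
    using coeff[of "[i, i, j]"] assms
    by (simp add: pair_bary_log_def texp_def axis_def field_simps)
  have "a $ i * (1/2 - a $ j) = a $ j * (1/2 - a $ i)"
    using parallel sum_i sum_j by (metis add_diff_cancel_left')
  then have aj: "a $ j = a $ i"
    by (simp add: algebra_simps)
  have bj: "b $ j = b $ i"
    using aj sum_i sum_j by linarith
  have "(a $ i + b $ i) ^ 3 = 0"
    using cubic unfolding bj aj by (simp add: power3_eq_cube algebra_simps)
  then show False
    using sum_i by simp
qed

section \<open>Signatures of piecewise linear paths\<close>

definition sig3_upto :: "(real \<Rightarrow> real^'d) \<Rightarrow> real \<Rightarrow> 'd tens" where
  "sig3_upto X t = (\<lambda>w. if length w \<le> 3 then it_int X (rev w) t else 0)"

text \<open>\<open>it_int\<close> is built from \<open>integral\<close>, which is \<open>0\<close> on non-integrable functions, so the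
  integrability of the integrands has to be propagated along the path.\<close>
definition iterated_integrable :: "(real \<Rightarrow> real^'d) \<Rightarrow> real \<Rightarrow> bool" where
  "iterated_integrable X t \<longleftrightarrow> (\<forall>ws w. length ws \<le> 2 \<longrightarrow>
     (\<lambda>s. it_int X ws s * (vector_derivative X (at s) $ w)) integrable_on {0..t})"

lemma sig3_upto_Tset [simp]: "sig3_upto X t \<in> Tset"
  by (simp add: sig3_upto_def Tset_def)

lemma iterated_integrable_0: "iterated_integrable X 0"
  by (auto simp: iterated_integrable_def intro: integrable_on_refl[where a = "0::real", simplified])

lemma sig3_upto_0: "sig3_upto X 0 = tone"
proof
  fix w :: "'a list"
  show "sig3_upto X 0 w = tone w"
    by (cases "rev w") (auto simp: sig3_upto_def tone_def)
qed

lemma vector_derivative_affine_segment: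
  assumes "\<forall>s\<in>{t0..t1}. X s = a + s *\<^sub>R b" and "s \<in> {t0<..<t1}"
  shows "vector_derivative X (at s) = b"
proof -
  have "((\<lambda>s. a + s *\<^sub>R b) has_vector_derivative b) (at s)"
    by (auto intro!: derivative_eq_intros)
  then have "(X has_vector_derivative b) (at s)"
    by (rule has_vector_derivative_transform_within_open[where S = "{t0<..<t1}"]) (use assms in auto)
  then show ?thesis
    by (rule vector_derivative_at)
qed

lemma has_real_derivative_tmul_texp_segment:
  assumes "length u \<le> 2"
  shows "((\<lambda>s. tmul P (texp (tlevel1 ((s - t0) *\<^sub>R b))) (u @ [w])) has_real_derivative
     tmul P (texp (tlevel1 ((s - t0) *\<^sub>R b))) u * b $ w) (at s)"
proof -
  consider "u = []" | x where "u = [x]" | x y where "u = [x, y]"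
    using assms by (auto simp: le_Suc_eq length_Suc_conv numeral_2_eq_2)
  then show ?thesis
    by cases
      (auto intro!: derivative_eq_intros simp: field_simps power2_eq_square)
qed

lemma has_integral_it_int_affine_segment:
  fixes X :: "real \<Rightarrow> real^'d::finite"
  assumes t0: "0 \<le> t0" "t0 < t1" and affine: "\<forall>s\<in>{t0..t1}. X s = a + s *\<^sub>R b"
    and integrable: "iterated_integrable X t0"
    and ws: "length ws \<le> 2"
      "\<forall>t\<in>{t0..t1}. it_int X ws t = tmul (sig3_upto X t0) (texp (tlevel1 ((t - t0) *\<^sub>R b))) (rev ws)"
    and t: "t \<in> {t0..t1}"
  shows "((\<lambda>s. it_int X ws s * (vector_derivative X (at s) $ w)) has_integral
    tmul (sig3_upto X t0) (texp (tlevel1 ((t - t0) *\<^sub>R b))) (rev ws @ [w])) {0..t}"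
proof -
  let ?g = "\<lambda>s. it_int X ws s * (vector_derivative X (at s) $ w)"
  let ?H = "\<lambda>s. tmul (sig3_upto X t0) (texp (tlevel1 ((s - t0) *\<^sub>R b))) (rev ws @ [w])"
  let ?h = "\<lambda>s. tmul (sig3_upto X t0) (texp (tlevel1 ((s - t0) *\<^sub>R b))) (rev ws) * b $ w"
  have "(?h has_integral (?H t - ?H t0)) {t0..t}"
    using t ws(1) has_real_derivative_tmul_texp_segment[of "rev ws"]
    by (intro fundamental_theorem_of_calculus)
      (auto simp: has_real_derivative_iff_has_vector_derivative intro: has_vector_derivative_at_within)
  then have on_segment: "(?g has_integral (?H t - ?H t0)) {t0..t}"
    by (rule has_integral_spike_finite[where S = "{t0, t}", rotated 2])
      (use ws(2) t vector_derivative_affine_segment[OF affine] in auto)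
  have "?g integrable_on {0..t0}"
    using integrable ws(1) by (simp add: iterated_integrable_def)
  moreover have "?H t0 = sig3_upto X t0 (rev ws @ [w])"
    by (simp add: texp_tlevel1_zero)
  moreover have "\<dots> = it_int X (w # ws) t0"
    using ws(1) by (simp add: sig3_upto_def)
  ultimately have before_segment: "(?g has_integral ?H t0) {0..t0}"
    by (simp add: has_integral_integral)
  have "(?g has_integral (?H t0 + (?H t - ?H t0))) {0..t}"
    by (rule has_integral_combine[OF _ _ before_segment on_segment]) (use t t0 in auto)
  then show ?thesis
    by simp
qed

lemma it_int_affine_segment:
  fixes X :: "real \<Rightarrow> real^'d::finite"
  assumes "0 \<le> t0" "t0 < t1" "\<forall>s\<in>{t0..t1}. X s = a + s *\<^sub>R b" "iterated_integrable X t0"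
    and "length ws \<le> 3"
  shows "\<forall>t\<in>{t0..t1}. it_int X ws t = tmul (sig3_upto X t0) (texp (tlevel1 ((t - t0) *\<^sub>R b))) (rev ws)"
  using assms(5)
proof (induction ws)
  case Nil
  show ?case
    by (simp add: sig3_upto_def)
next
  case (Cons w ws)
  then show ?case
    using has_integral_it_int_affine_segment[OF assms(1-4)] by (simp add: integral_unique)
qed

lemma sig3_upto_affine_segment:
  fixes X :: "real \<Rightarrow> real^'d::finite"
  assumes "0 \<le> t0" "t0 < t1" "\<forall>s\<in>{t0..t1}. X s = a + s *\<^sub>R b" "iterated_integrable X t0"
  shows "iterated_integrable X t1"
    and "sig3_upto X t1 = tmul (sig3_upto X t0) (texp (tlevel1 ((t1 - t0) *\<^sub>R b)))"
proof -
  have t1: "t1 \<in> {t0..t1}"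
    using assms(2) by simp
  show "iterated_integrable X t1"
    unfolding iterated_integrable_def
  proof (intro allI impI)
    fix ws :: "'d list" and w
    assume ws: "length ws \<le> 2"
    then have "length ws \<le> 3"
      by simp
    with ws show "(\<lambda>s. it_int X ws s * vector_derivative X (at s) $ w) integrable_on {0..t1}"
      using has_integral_it_int_affine_segment[OF assms ws it_int_affine_segment[OF assms] t1] by blast
  qed
  show "sig3_upto X t1 = tmul (sig3_upto X t0) (texp (tlevel1 ((t1 - t0) *\<^sub>R b)))"
  proof
    fix w :: "'d list"
    show "sig3_upto X t1 w = tmul (sig3_upto X t0) (texp (tlevel1 ((t1 - t0) *\<^sub>R b))) w"
      using it_int_affine_segment[OF assms, of "rev w"] t1 by (simp add: sig3_upto_def tmul_long)
  qed
qed

fun tprod :: "(nat \<Rightarrow> 'd tens) \<Rightarrow> nat \<Rightarrow> 'd tens" where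
  "tprod f 0 = tone"
| "tprod f (Suc i) = tmul (tprod f i) (f i)"

lemma sig3_piecewise_linear:
  fixes X :: "real \<Rightarrow> real^'d::finite"
  assumes "t 0 = 0" "t m = 1" "\<forall>i<m. t i < t (Suc i)"
    and affine: "\<forall>i<m. \<forall>s\<in>{t i..t (Suc i)}. X s = A i + s *\<^sub>R B i"
  shows "sig3 X = tprod (\<lambda>j. texp (tlevel1 ((t (Suc j) - t j) *\<^sub>R B j))) m"
proof -
  have "0 \<le> t i \<and> iterated_integrable X (t i) \<and>
      sig3_upto X (t i) = tprod (\<lambda>j. texp (tlevel1 ((t (Suc j) - t j) *\<^sub>R B j))) i" if "i \<le> m" for i
    using that
  proof (induction i)
    case 0
    then show ?case
      using assms(1) iterated_integrable_0[of X] sig3_upto_0[of X] by simp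
  next
    case (Suc i)
    then have segment: "0 \<le> t i" "t i < t (Suc i)" "\<forall>s\<in>{t i..t (Suc i)}. X s = A i + s *\<^sub>R B i"
        "iterated_integrable X (t i)"
      using assms(3) affine by auto
    with sig3_upto_affine_segment[OF segment] Suc show ?case
      by auto
  qed
  from this[of m] show ?thesis
    using assms(2) by (simp add: sig3_def sig3_upto_def)
qed

lemma sum_lessThan_split_at:
  fixes f :: "nat \<Rightarrow> 'a::comm_monoid_add"
  assumes "k < m"
  shows "(\<Sum>j<m. f j) = (\<Sum>j<k. f j) + f k + (\<Sum>j\<in>{Suc k..<m}. f j)"
proof -
  have "(\<Sum>j<m. f j) = (\<Sum>j<Suc k. f j) + (\<Sum>j\<in>{Suc k..<m}. f j)"
    using assms by (metis Suc_leI lessThan_atLeast0 sum.atLeastLessThan_concat zero_le)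
  then show ?thesis
    by simp
qed

text \<open>The path with increment \<open>c j\<close> on \<open>[j/m, (j+1)/m]\<close>.\<close>
definition concat_segments :: "nat \<Rightarrow> (nat \<Rightarrow> 'a::real_vector) \<Rightarrow> real \<Rightarrow> 'a" where
  "concat_segments m c s = (\<Sum>j<m. min 1 (max 0 (real m * s - real j)) *\<^sub>R c j)"

lemma concat_segments_on_segment:
  assumes "k < m" "real k \<le> real m * s" "real m * s \<le> real k + 1"
  shows "concat_segments m c s = ((\<Sum>j<k. c j) - real k *\<^sub>R c k) + s *\<^sub>R (real m *\<^sub>R c k)"
proof -
  have "(\<Sum>j<k. min 1 (max 0 (real m * s - real j)) *\<^sub>R c j) = (\<Sum>j<k. c j)"
    using assms by (intro sum.cong) auto
  moreover have "(\<Sum>j\<in>{Suc k..<m}. min 1 (max 0 (real m * s - real j)) *\<^sub>R c j) = 0"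
    using assms by (intro sum.neutral) auto
  ultimately show ?thesis
    using assms by (simp add: concat_segments_def sum_lessThan_split_at[OF assms(1)] algebra_simps)
qed

lemma tprod_in_Lim:
  fixes c :: "nat \<Rightarrow> real^'d::finite"
  assumes "0 < m"
  shows "tprod (\<lambda>j. texp (tlevel1 (c j))) m \<in> Lim m"
proof -
  define t where "t i = real i / real m" for i
  have t: "t 0 = 0" "t m = 1" "\<forall>i<m. t i < t (Suc i)"
    using assms by (auto simp: t_def divide_strict_right_mono)
  have affine: "\<forall>k<m. \<forall>s\<in>{t k..t (Suc k)}.
      concat_segments m c s = ((\<Sum>j<k. c j) - real k *\<^sub>R c k) + s *\<^sub>R (real m *\<^sub>R c k)"
    using assms by (intro allI impI ballI concat_segments_on_segment) (auto simp: t_def field_simps)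
  then have "pw_linear m (concat_segments m c)"
    unfolding pw_linear_def using t by blast
  moreover have "sig3 (concat_segments m c) = tprod (\<lambda>j. texp (tlevel1 (c j))) m"
    using sig3_piecewise_linear[OF t affine] assms by (simp add: t_def field_simps)
  ultimately show ?thesis
    unfolding Lim_def by (intro CollectI exI[of _ "concat_segments m c"]) simp
qed

lemma Lim_subset_tprod: "(Lim m :: 'd::finite tens set) \<subseteq> range (\<lambda>c. tprod (\<lambda>j. texp (tlevel1 (c j))) m)"
proof
  fix x :: "'d tens"
  assume "x \<in> Lim m"
  then obtain X t where x: "x = sig3 X" and t: "t 0 = 0" "t m = 1" "\<forall>i<m. t i < t (Suc i)"
    and "\<forall>i<m. \<exists>a b :: real^'d. \<forall>s\<in>{t i..t (Suc i)}. X s = a + s *\<^sub>R b"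
    by (auto simp: Lim_def pw_linear_def)
  then obtain A B where "\<forall>i<m. \<forall>s\<in>{t i..t (Suc i)}. X s = A i + s *\<^sub>R B i"
    by metis
  from sig3_piecewise_linear[OF t this] show "x \<in> range (\<lambda>c. tprod (\<lambda>j. texp (tlevel1 (c j))) m)"
    unfolding x by (intro range_eqI[where x = "\<lambda>j. (t (Suc j) - t j) *\<^sub>R B j"])
qed

lemma Lim_1: "(Lim 1 :: 'd::finite tens set) = range (\<lambda>c. texp (tlevel1 c))"
proof
  show "Lim 1 \<subseteq> range (\<lambda>c. texp (tlevel1 c))"
    using Lim_subset_tprod[of 1] by auto
  show "range (\<lambda>c. texp (tlevel1 c)) \<subseteq> (Lim 1 :: 'd tens set)"
    using tprod_in_Lim[of 1 "\<lambda>_. c" for c] by auto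
qed

lemma tmul3_texp_tlevel1_in_Lim_3:
  "tmul (tmul (texp (tlevel1 c0)) (texp (tlevel1 c1))) (texp (tlevel1 c2)) \<in> (Lim 3 :: 'd::finite tens set)"
  using tprod_in_Lim[of 3 "\<lambda>j. [c0, c1, c2] ! j"] by (simp add: numeral_3_eq_3)

lemma Lim_le_2_two_factors:
  assumes "x \<in> (Lim m :: 'd::finite tens set)" "m \<le> 2"
  obtains a b :: "real^'d" where "x = tmul (texp (tlevel1 a)) (texp (tlevel1 b))"
proof -
  obtain c where x: "x = tprod (\<lambda>j. texp (tlevel1 (c j))) m"
    using assms(1) Lim_subset_tprod by blast
  consider "m = 0" | "m = 1" | "m = 2"
    using assms(2) by linarith
  then show ?thesis
    by cases (use x that[of 0 0] that[of "c 0" 0] that[of "c 0" "c 1"] in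
      \<open>simp_all add: texp_tlevel1_zero numeral_2_eq_2\<close>)
qed

lemma Lim_1_pairs:
  "{xs. length xs = length [1::nat, 1] \<and>
      (\<forall>k<length [1::nat, 1]. xs ! k \<in> (Lim ([1::nat, 1] ! k) :: 'd::finite tens set))}
    = {[texp (tlevel1 c1), texp (tlevel1 c2)] | c1 c2. True}"
proof (intro set_eqI iffI)
  fix xs :: "'d tens list"
  assume "xs \<in> {xs. length xs = length [1::nat, 1] \<and>
    (\<forall>k<length [1::nat, 1]. xs ! k \<in> (Lim ([1::nat, 1] ! k) :: 'd tens set))}"
  then have xs: "length xs = 2" "xs ! 0 \<in> Lim 1" "xs ! 1 \<in> Lim 1"
    by auto
  from xs(2,3)[unfolded Lim_1] obtain c1 c2
    where "xs ! 0 = texp (tlevel1 c1)" "xs ! 1 = texp (tlevel1 c2)"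
    by blast
  moreover have "xs = [xs ! 0, xs ! 1]"
    using xs(1) by (intro nth_equalityI) (auto simp: less_2_cases_iff)
  ultimately show "xs \<in> {[texp (tlevel1 c1), texp (tlevel1 c2)] | c1 c2. True}"
    by (metis (mono_tags, lifting) mem_Collect_eq)
next
  fix xs :: "'d tens list"
  assume "xs \<in> {[texp (tlevel1 c1), texp (tlevel1 c2)] | c1 c2. True}"
  then obtain c1 c2 where xs: "xs = [texp (tlevel1 c1), texp (tlevel1 c2)]"
    by auto
  have "texp (tlevel1 c1) \<in> Lim 1" "texp (tlevel1 c2) \<in> Lim 1"
    unfolding Lim_1 by blast+
  then show "xs \<in> {xs. length xs = length [1::nat, 1] \<and>
    (\<forall>k<length [1::nat, 1]. xs ! k \<in> (Lim ([1::nat, 1] ! k) :: 'd tens set))}"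
    unfolding xs by (auto simp: less_Suc_eq)
qed

lemma bary_image_pairs_tlevel1:
  "bary ` {[texp (tlevel1 c1), texp (tlevel1 c2)] | c1 c2 :: real^'d::finite. True}
    = {texp (pair_bary_log c1 c2) | c1 c2. True}"
  by (force simp: bary_pair_tlevel1)

theorem lemma8p5:
  assumes "CARD('d::finite) \<ge> 2"
  shows "Bd3 [1, 1] TYPE('d) = 3"
proof -
  obtain i j :: 'd where "i \<noteq> j"
    using assms card_le_Suc0_iff_eq[of "UNIV :: 'd set"] by auto
  show ?thesis
    unfolding Bd3_def Lim_1_pairs bary_image_pairs_tlevel1
  proof (rule Least_equality)
    show "{texp (pair_bary_log c1 c2) | c1 c2. True} \<subseteq> (Lim 3 :: 'd tens set)"
      by (auto simp: texp_pair_bary_log tmul3_texp_tlevel1_in_Lim_3)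
  next
    fix m
    assume "{texp (pair_bary_log c1 c2) | c1 c2. True} \<subseteq> (Lim m :: 'd tens set)"
    then have in_Lim: "texp (pair_bary_log (axis i 1) (axis j 1)) \<in> (Lim m :: 'd tens set)"
      by auto
    show "3 \<le> m"
    proof (rule ccontr)
      assume "\<not> 3 \<le> m"
      then obtain a b :: "real^'d"
        where "texp (pair_bary_log (axis i 1) (axis j 1)) = tmul (texp (tlevel1 a)) (texp (tlevel1 b))"
        using Lim_le_2_two_factors[OF in_Lim] by fastforce
      with texp_pair_bary_log_axis_ne_two_factors[OF \<open>i \<noteq> j\<close>] show False
        by blast
    qed
  qed
qed

end
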